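(* Let $\mathcal H$ be a real Hilbert space, $t_0>0$, and let $f:\mathcal H\to\mathbb R$ be a $\mathcal C^2$ function which is $\mu$-strongly convex for some $\mu>0$, with unique minimizer $x^\star$. Let $e:[t_0,+\infty[\to\mathcal H$ be continuously differentiable and let $x:[t_0,+\infty[\to\mathcal H$ be a solution trajectory of $$\ddot x(t)+2\sqrt\mu\,\dot x(t)+\beta\nabla^2f(x(t))\dot x(t)+\beta\dot e(t)+\nabla f(x(t))+e(t)=0.$$ Define $\mathcal E(t)=f(x(t))-\min_{\mathcal H}f+\frac12\|\sqrt\mu(x(t)-x^\star)+\dot x(t)+\beta\nabla f(x(t))\|^2$. Suppose (a) $0\le\beta\le\frac{1}{2\sqrt\mu}$ and (b) $\int_{t_0}^{+\infty}\|e(t)\|dt<+\infty$ and $\int_{t_0}^{+\infty}\|\dot e(t)\|dt<+\infty$. Then: (i) for all $t\ge t_0$, $$\mathcal E(t)\le\mathcal E(t_0)e^{-\frac{\sqrt\mu}{2}(t-t_0)}+Me^{-\frac{\sqrt\mu}{2}t}\int_{t_0}^te^{\frac{\sqrt\mu}{2}\tau}\|e(\tau)+\beta\dot e(\tau)\|d\tau,$$ where $M:=\sqrt{2\mathcal E(t_0)}+\int_{t_0}^{+\infty}\|e(\tau)+\beta\dot e(\tau)\|d\tau$; consequently $\lim_{t\to+\infty}\mathcal E(t)=0$, $\lim_{t\to+\infty}f(x(t))=\min_{\mathcal H}f$, and $\lim_{t\to+\infty}\|x(t)-x^\star\|=\lim_{t\to+\infty}\|\nabla f(x(t))\|=\lim_{t\to+\infty}\|\dot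 x(t)\|=0$; (ii) if moreover $\|e(t)+\beta\dot e(t)\|=\mathcal O(1/t^p)$ as $t\to+\infty$ for some $p>0$, then $\mathcal E(t)=\mathcal O(1/t^p)$, and consequently $f(x(t))-\min_{\mathcal H}f=\mathcal O(1/t^p)$, $\|x(t)-x^\star\|^2=\mathcal O(1/t^p)$, $\|\dot x(t)\|^2=\mathcal O(1/t^p)$; in addition, when $\beta>0$, $e^{-\sqrt\mu t}\int_{t_0}^te^{\sqrt\mu s}\|\nabla f(x(s))\|^2ds=\mathcal O(1/t^p)$.
   Context: $f$ is $\mu$-strongly convex if $f-\frac\mu2\|\cdot\|^2$ is convex. *)

theory Defs
  imports "HOL-Analysis.Analysis" "HOL-Library.Landau_Symbols"
begin

definition strongly_convex_on :: "'a::real_normed_vector set \<Rightarrow> real \<Rightarrow> ('a \<Rightarrow> real) \<Rightarrow> bool" where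
  "strongly_convex_on S \<mu> f \<longleftrightarrow> convex_on S (\<lambda>x. f x - \<mu> / 2 * (norm x)\<^sup>2)"

definition energy ::
  "('a::real_inner \<Rightarrow> real) \<Rightarrow> ('a \<Rightarrow> 'a) \<Rightarrow> 'a \<Rightarrow> real \<Rightarrow> real
    \<Rightarrow> (real \<Rightarrow> 'a) \<Rightarrow> (real \<Rightarrow> 'a) \<Rightarrow> real \<Rightarrow> real" where
  "energy f gradf xstar \<mu> \<beta> x x' t =
     f (x t) - f xstar
     + 1/2 * (norm (sqrt \<mu> *\<^sub>R (x t - xstar) + x' t + \<beta> *\<^sub>R gradf (x t)))\<^sup>2"

end

(*
  Write v = sqrt mu (x - xstar) + x' + beta grad f(x) and g = e + beta e', so that E = f(x) - min f + |v|^2/2.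
  The ODE says exactly v' = -(sqrt mu x' + grad f(x) + g), and strong convexity together with
  beta sqrt mu <= 1/2 turns the derivative of E into the dissipation inequality
    E' + sqrt mu / 2 E + beta / 4 |grad f(x)|^2 <= -<v, g> <= sqrt (2 E) |g|.
  Integrating it once, sqrt (2 E) never exceeds M; with the integrating factor exp (sqrt mu t / 2)
  it then gives the estimate (i): E is bounded by a decaying exponential plus M times the convolution
  of |g| with exp (- sqrt mu t / 2), which tends to 0 when |g| is integrable and is O(t^-p) when |g| is.
  The remaining quantities are bounded by multiples of E, using for x' that grad f is Lipschitz near xstar.
*)

theory Submission
  imports Defs "HOL-Real_Asymp.Real_Asymp"
begin

lemma convex_on_UNIV_imp_above_tangent:
  fixes h :: "'a::real_normed_vector \<Rightarrow> real"
  assumes convex: "convex_on UNIV h" and deriv: "(h has_derivative D) (at y)"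
  shows "D (z - y) \<le> h z - h y"
proof -
  define d where "d = z - y"
  define \<phi> where "\<phi> = (\<lambda>t::real. h (y + t *\<^sub>R d))"
  have "convex_on UNIV \<phi>"
  proof (rule convex_onI)
    fix t a b :: real assume t: "0 < t" "t < 1"
    have "y + ((1 - t) * a + t * b) *\<^sub>R d = (1 - t) *\<^sub>R (y + a *\<^sub>R d) + t *\<^sub>R (y + b *\<^sub>R d)"
      by (simp add: algebra_simps)
    then have "\<phi> ((1 - t) *\<^sub>R a + t *\<^sub>R b) = h ((1 - t) *\<^sub>R (y + a *\<^sub>R d) + t *\<^sub>R (y + b *\<^sub>R d))"
      by (simp add: \<phi>_def)
    also have "\<dots> \<le> (1 - t) * \<phi> a + t * \<phi> b"
      unfolding \<phi>_def using t by (intro convex_onD[OF convex]) auto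
    finally show "\<phi> ((1 - t) *\<^sub>R a + t *\<^sub>R b) \<le> (1 - t) * \<phi> a + t * \<phi> b" .
  qed simp
  moreover have "(\<phi> has_field_derivative D d) (at 0)"
  proof -
    have "((\<lambda>t::real. y + t *\<^sub>R d) has_derivative (\<lambda>t. t *\<^sub>R d)) (at 0)"
      by (auto intro!: derivative_eq_intros)
    from has_derivative_compose[OF this, of h] deriv
    have "(\<phi> has_derivative (\<lambda>t. D (t *\<^sub>R d))) (at 0)"
      unfolding \<phi>_def by (simp add: o_def)
    moreover have "D (t *\<^sub>R d) = t * D d" for t
      using has_derivative_linear[OF deriv] by (simp add: linear_scale)
    ultimately show ?thesis
      by (simp add: has_field_derivative_def mult_commute_abs)
  qed
  ultimately have "D d * (1 - 0) \<le> \<phi> 1 - \<phi> 0"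
    by (intro convex_on_imp_above_tangent) auto
  then show ?thesis
    unfolding \<phi>_def d_def by simp
qed

lemma strongly_convex_on_UNIV_imp_above_tangent:
  fixes f :: "'a::real_inner \<Rightarrow> real"
  assumes "strongly_convex_on UNIV \<mu> f" and "(f has_derivative (\<lambda>h. G \<bullet> h)) (at y)"
  shows "G \<bullet> (z - y) + \<mu> / 2 * (norm (z - y))\<^sup>2 \<le> f z - f y"
proof -
  have "((\<lambda>w. f w - \<mu> / 2 * (w \<bullet> w)) has_derivative (\<lambda>h. G \<bullet> h - \<mu> * (y \<bullet> h))) (at y)"
    by (auto intro!: derivative_eq_intros assms(2) simp: inner_commute)
  from convex_on_UNIV_imp_above_tangent[OF _ this, of z] assms(1)
  have "G \<bullet> (z - y) - \<mu> * (y \<bullet> (z - y)) \<le> f z - \<mu> / 2 * (z \<bullet> z) - (f y - \<mu> / 2 * (y \<bullet> y))"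
    by (simp add: strongly_convex_on_def power2_norm_eq_inner)
  moreover have "\<mu> * (y \<bullet> (z - y)) = \<mu> * (y \<bullet> z) - \<mu> * (y \<bullet> y)"
    by (simp add: inner_diff_right right_diff_distrib)
  moreover have "\<mu> / 2 * (norm (z - y))\<^sup>2 = \<mu> / 2 * (z \<bullet> z) - \<mu> * (y \<bullet> z) + \<mu> / 2 * (y \<bullet> y)"
    by (simp add: power2_norm_eq_inner inner_diff_left inner_diff_right inner_commute ring_distribs)
  ultimately show ?thesis
    by linarith
qed

lemma continuous_derivative_imp_local_lipschitz:
  fixes g :: "'a::real_normed_vector \<Rightarrow> 'b::real_normed_vector"
  assumes deriv: "\<And>y. (g has_derivative blinfun_apply (D y)) (at y)" and "isCont D x"
  obtains r L where "r > 0" and "L-lipschitz_on (ball x r) g"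
proof -
  obtain r where "r > 0" and r: "\<And>y. dist y x < r \<Longrightarrow> dist (D y) (D x) < 1"
    using assms(2) unfolding continuous_at_eps_delta by (metis zero_less_one)
  have "onorm (D y) \<le> norm (D x) + 1" if "y \<in> ball x r" for y
  proof -
    have "norm (D y - D x) < 1"
      using r[of y] that by (simp add: dist_norm norm_minus_commute)
    then show ?thesis
      using norm_triangle_sub[of "D y" "D x"] by (simp add: norm_blinfun.rep_eq[symmetric])
  qed
  then have "(norm (D x) + 1)-lipschitz_on (ball x r) g"
    by (intro bounded_derivative_imp_lipschitz[OF has_derivative_at_withinI[OF deriv]]) auto
  with \<open>r > 0\<close> show ?thesis
    by (rule that)
qed

text \<open>With \<open>a = x - xstar\<close>, \<open>b = x'\<close> and \<open>c = \<nabla>f(x)\<close>, the first two terms are the derivative of the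
  energy along the unperturbed flow. The proof exhibits the left-hand side as a sum of nonpositive
  terms; \<open>\<kappa>\<close> is the weight given to the strong convexity inequality.\<close>

lemma unperturbed_energy_dissipation:
  fixes a b c :: "'a::real_inner"
  assumes s: "s > 0" and \<beta>: "0 \<le> \<beta>" "\<beta> * s \<le> 1/2"
    and F: "0 \<le> F" and tangent: "F + s\<^sup>2 / 2 * (norm a)\<^sup>2 \<le> a \<bullet> c"
  defines "v \<equiv> s *\<^sub>R a + b + \<beta> *\<^sub>R c"
  shows "c \<bullet> b - v \<bullet> (s *\<^sub>R b + c) + s / 2 * (F + (norm v)\<^sup>2 / 2) + \<beta> / 4 * (norm c)\<^sup>2 \<le> 0"
proof -
  define \<kappa> where "\<kappa> = s - \<beta> * s * s / 2"
  have \<beta>s: "\<beta> * s * s \<le> s / 2" "\<beta> * s * (s * s * s) \<le> s * s * s / 2"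
    using mult_right_mono[OF \<beta>(2), of s] mult_right_mono[OF \<beta>(2), of "s * s * s"] s by auto
  have \<kappa>: "0 \<le> \<kappa>" "s / 2 - \<kappa> \<le> 0"
    using \<beta>s s by (auto simp: \<kappa>_def)
  have "0 \<le> a \<bullet> c - F - s * s / 2 * (a \<bullet> a)"
    using tangent[unfolded power2_norm_eq_inner, unfolded power2_eq_square] by simp
  with \<kappa>(1) have "0 \<le> \<kappa> * (a \<bullet> c - F - s * s / 2 * (a \<bullet> a))"
    by (rule mult_nonneg_nonneg)
  moreover have "(s / 2 - \<kappa>) * F \<le> 0"
    using \<kappa>(2) F by (rule mult_nonpos_nonneg)
  moreover have "(\<beta> * s * (s * s * s) / 4 - s * s * s / 8) * (a \<bullet> a) \<le> 0"
    using \<beta>s by (simp add: mult_nonpos_nonneg)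
  moreover have "\<beta> * (\<beta> * s / 2 - 3 / 4) * (c \<bullet> c) \<le> 0"
    using \<beta> by (simp add: mult_nonneg_nonpos mult_nonpos_nonneg)
  moreover have "0 \<le> s / 8 * ((s *\<^sub>R a + 2 *\<^sub>R b) \<bullet> (s *\<^sub>R a + 2 *\<^sub>R b))"
    "0 \<le> s / 4 * ((b + \<beta> *\<^sub>R c) \<bullet> (b + \<beta> *\<^sub>R c))"
    using s by simp_all
  moreover have "c \<bullet> b - v \<bullet> (s *\<^sub>R b + c) + s / 2 * (F + (norm v)\<^sup>2 / 2) + \<beta> / 4 * (norm c)\<^sup>2
     = - \<kappa> * (a \<bullet> c - F - s * s / 2 * (a \<bullet> a)) + (s / 2 - \<kappa>) * F
       + (\<beta> * s * (s * s * s) / 4 - s * s * s / 8) * (a \<bullet> a) + \<beta> * (\<beta> * s / 2 - 3 / 4) * (c \<bullet> c)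
       - s / 8 * ((s *\<^sub>R a + 2 *\<^sub>R b) \<bullet> (s *\<^sub>R a + 2 *\<^sub>R b))
       - s / 4 * ((b + \<beta> *\<^sub>R c) \<bullet> (b + \<beta> *\<^sub>R c))"
    unfolding v_def \<kappa>_def power2_norm_eq_inner
    by (simp add: inner_add_left inner_add_right inner_commute field_simps)
  ultimately show ?thesis
    by linarith
qed

lemma bigo_of_eventually_le:
  fixes f g w :: "'a \<Rightarrow> real"
  assumes "\<forall>\<^sub>F t in F. 0 \<le> f t \<and> f t \<le> g t" and "g \<in> O[F](w)"
  shows "f \<in> O[F](w)"
proof -
  have "f \<in> O[F](g)"
    using assms(1) by (intro landau_o.big_mono) (auto elim: eventually_mono)
  then show ?thesis
    using assms(2) by (rule landau_o.big_trans)
qed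

lemma bigo_const_mult:
  fixes f :: "'a \<Rightarrow> real"
  assumes "f \<in> O[F](g)"
  shows "(\<lambda>t. k * f t) \<in> O[F](g)"
  using assms by (cases "k = 0") simp_all

text \<open>\<open>exp_convolution c a h\<close> is the solution of \<open>y' + c y = h\<close> with \<open>y a = 0\<close>.\<close>

definition exp_convolution :: "real \<Rightarrow> real \<Rightarrow> (real \<Rightarrow> real) \<Rightarrow> real \<Rightarrow> real" where
  "exp_convolution c a h t = exp (- c * t) * integral {a..t} (\<lambda>\<tau>. exp (c * \<tau>) * h \<tau>)"

lemma integrable_exp_weighted:
  fixes h :: "real \<Rightarrow> real"
  assumes "continuous_on {a..} h" and "a \<le> b"
  shows "(\<lambda>\<tau>. exp (c * \<tau>) * h \<tau>) integrable_on {b..t}"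
proof -
  have "continuous_on {b..t} h"
    using assms(2) by (intro continuous_on_subset[OF assms(1)]) auto
  then show ?thesis
    by (intro integrable_continuous_interval continuous_intros)
qed

lemma exp_convolution_eq_integral:
  "exp_convolution c a h t = integral {a..t} (\<lambda>\<tau>. exp (- c * (t - \<tau>)) * h \<tau>)"
proof -
  have "exp (- c * t) * (exp (c * \<tau>) * h \<tau>) = exp (- c * (t - \<tau>)) * h \<tau>" for \<tau>
    by (simp add: mult.assoc[symmetric] exp_add[symmetric] right_diff_distrib)
  then show ?thesis
    unfolding exp_convolution_def integral_mult_right[symmetric] by (simp only:)
qed

lemma exp_convolution_cmult:
  "exp_convolution c a (\<lambda>\<tau>. k * h \<tau>) t = k * exp_convolution c a h t"
  by (simp add: exp_convolution_def mult.left_commute)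

lemma exp_convolution_nonneg:
  assumes "continuous_on {a..} h" and "\<And>\<tau>. a \<le> \<tau> \<Longrightarrow> 0 \<le> h \<tau>"
  shows "0 \<le> exp_convolution c a h t"
proof -
  have "0 \<le> integral {a..t} (\<lambda>\<tau>. exp (c * \<tau>) * h \<tau>)"
    by (rule integral_nonneg[OF integrable_exp_weighted[OF assms(1) order_refl]]) (use assms(2) in auto)
  then show ?thesis
    by (simp add: exp_convolution_def)
qed

lemma exp_convolution_antimono_rate:
  assumes "c \<le> c'" and "continuous_on {a..} h" and "\<And>\<tau>. a \<le> \<tau> \<Longrightarrow> 0 \<le> h \<tau>"
  shows "exp_convolution c' a h t \<le> exp_convolution c a h t"
  unfolding exp_convolution_eq_integral
proof (rule integral_le)
  have h: "continuous_on {a..t} h"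
    by (rule continuous_on_subset[OF assms(2)]) auto
  show "(\<lambda>\<tau>. exp (- c' * (t - \<tau>)) * h \<tau>) integrable_on {a..t}"
    "(\<lambda>\<tau>. exp (- c * (t - \<tau>)) * h \<tau>) integrable_on {a..t}"
    by (intro integrable_continuous_interval continuous_intros h)+
  show "exp (- c' * (t - \<tau>)) * h \<tau> \<le> exp (- c * (t - \<tau>)) * h \<tau>" if "\<tau> \<in> {a..t}" for \<tau>
    using that assms(1,3) by (intro mult_right_mono) (auto intro: mult_right_mono)
qed

lemma exp_convolution_split:
  assumes "continuous_on {a..} h" and "a \<le> T" and "T \<le> t"
  shows "exp_convolution c a h t = exp (- c * (t - T)) * exp_convolution c a h T + exp_convolution c T h t"
proof -
  have "integral {a..t} (\<lambda>\<tau>. exp (c * \<tau>) * h \<tau>)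
      = integral {a..T} (\<lambda>\<tau>. exp (c * \<tau>) * h \<tau>) + integral {T..t} (\<lambda>\<tau>. exp (c * \<tau>) * h \<tau>)"
    by (intro Henstock_Kurzweil_Integration.integral_combine[symmetric] integrable_exp_weighted)
      (use assms in auto)
  moreover have "exp (- c * t) = exp (- c * (t - T)) * exp (- c * T)"
    by (simp add: exp_add[symmetric] right_diff_distrib)
  ultimately show ?thesis
    unfolding exp_convolution_def by (simp only: distrib_left mult.assoc)
qed

lemma exp_convolution_tendsto_zero:
  assumes "c > 0" and cont: "continuous_on {a..} h" and nonneg: "\<And>\<tau>. a \<le> \<tau> \<Longrightarrow> 0 \<le> h \<tau>"
    and int: "h integrable_on {a..}"
  shows "(exp_convolution c a h \<longlongrightarrow> 0) at_top"
proof (rule tendsto_at_topI_sequentially)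
  fix X :: "nat \<Rightarrow> real"
  assume X: "filterlim X at_top sequentially"
  define k where "k n \<tau> = (if \<tau> \<in> {..X n} then exp (- c * (X n - \<tau>)) * h \<tau> else 0)" for n \<tau>
  have restrict: "{..X n} \<inter> {a..} = {a..X n}" for n
    by auto
  have k_int: "k n integrable_on {a..}" for n
  proof -
    have "continuous_on {a..X n} h"
      by (rule continuous_on_subset[OF cont]) auto
    then show ?thesis
      unfolding k_def integrable_restrict_Int restrict
      by (intro integrable_continuous_interval continuous_intros)
  qed
  have "(\<lambda>n. integral {a..} (k n)) \<longlonglongrightarrow> integral {a..} (\<lambda>\<tau>. 0)"
  proof (rule dominated_convergence(2)[OF k_int int])
    show "norm (k n \<tau>) \<le> h \<tau>" if "\<tau> \<in> {a..}" for n \<tau>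
      using that assms(1) nonneg[of \<tau>] by (auto simp: k_def intro: mult_left_le_one_le)
    show "(\<lambda>n. k n \<tau>) \<longlonglongrightarrow> 0" for \<tau>
    proof -
      have "((\<lambda>y. exp (- c * (y - \<tau>))) \<longlongrightarrow> 0) at_top"
        using assms(1) by real_asymp
      then have "(\<lambda>n. exp (- c * (X n - \<tau>))) \<longlonglongrightarrow> 0"
        using X by (rule filterlim_compose)
      then have "(\<lambda>n. exp (- c * (X n - \<tau>)) * h \<tau>) \<longlonglongrightarrow> 0"
        by (rule tendsto_mult_left_zero)
      moreover have "\<forall>\<^sub>F n in sequentially. \<tau> \<le> X n"
        using X by (simp add: filterlim_at_top)
      then have "\<forall>\<^sub>F n in sequentially. exp (- c * (X n - \<tau>)) * h \<tau> = k n \<tau>"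
        by (rule eventually_mono) (simp add: k_def)
      ultimately show ?thesis
        by (rule Lim_transform_eventually)
    qed
  qed
  moreover have "integral {a..} (k n) = exp_convolution c a h (X n)" for n
    unfolding k_def integral_restrict_Int restrict exp_convolution_eq_integral ..
  ultimately show "(\<lambda>n. exp_convolution c a h (X n)) \<longlonglongrightarrow> 0"
    by simp
qed

lemma exp_powr_deriv_lower_bound:
  fixes c C p \<tau> :: real
  assumes "2 * p \<le> c * \<tau>" and "c > 0" and "C \<ge> 0" and "\<tau> > 0"
  shows "exp (c * \<tau>) * (C * \<tau> powr - p) \<le> 2 * C / c * (exp (c * \<tau>) * \<tau> powr - p * (c - p / \<tau>))"
proof -
  have "c / 2 \<le> c - p / \<tau>"
    using assms(1,4) by (simp add: field_simps)
  then have "2 * C / c * (exp (c * \<tau>) * \<tau> powr - p * (c / 2))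
      \<le> 2 * C / c * (exp (c * \<tau>) * \<tau> powr - p * (c - p / \<tau>))"
    using assms(2,3) by (intro mult_left_mono) auto
  moreover have "2 * C / c * (exp (c * \<tau>) * \<tau> powr - p * (c / 2)) = exp (c * \<tau>) * (C * \<tau> powr - p)"
    using assms(2) by simp
  ultimately show ?thesis
    by linarith
qed

lemma exp_convolution_powr_bound:
  fixes h :: "real \<Rightarrow> real"
  assumes c: "c > 0" and p: "p > 0" and C: "C \<ge> 0" and T: "T > 0" "2 * p \<le> c * T"
    and cont: "continuous_on {T..} h" and bound: "\<And>\<tau>. T \<le> \<tau> \<Longrightarrow> h \<tau> \<le> C * \<tau> powr - p"
    and t: "T \<le> t"
  shows "exp_convolution c T h t \<le> 2 * C / c * t powr - p"
proof -
  \<comment> \<open>\<open>\<Psi>\<close> is a supersolution: \<open>\<Psi>' \<tau> \<ge> exp (c \<tau>) h \<tau>\<close> as soon as \<open>p / \<tau> \<le> c / 2\<close>.\<close>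
  define \<Psi> where "\<Psi> \<tau> = 2 * C / c * (exp (c * \<tau>) * \<tau> powr - p)" for \<tau>
  define \<Psi>' where "\<Psi>' \<tau> = 2 * C / c * (exp (c * \<tau>) * \<tau> powr - p * (c - p / \<tau>))" for \<tau>
  have "(\<Psi> has_vector_derivative \<Psi>' \<tau>) (at \<tau> within {T..t})" if "\<tau> \<in> {T..t}" for \<tau>
  proof -
    have "\<tau> > 0"
      using that T by auto
    then have "(\<Psi> has_real_derivative \<Psi>' \<tau>) (at \<tau>)"
      unfolding \<Psi>_def \<Psi>'_def
      using c by (auto intro!: derivative_eq_intros simp: powr_diff field_simps)
    then show ?thesis
      by (simp add: has_real_derivative_iff_has_vector_derivative[symmetric] has_field_derivative_at_within)
  qed
  then have "(\<Psi>' has_integral (\<Psi> t - \<Psi> T)) {T..t}"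
    by (rule fundamental_theorem_of_calculus[OF t])
  moreover have "exp (c * \<tau>) * h \<tau> \<le> \<Psi>' \<tau>" if "\<tau> \<in> {T..t}" for \<tau>
  proof -
    have \<tau>: "\<tau> > 0" "T \<le> \<tau>"
      using that T by auto
    have "2 * p \<le> c * \<tau>"
      using T(2) mult_left_mono[OF \<tau>(2), of c] c by linarith
    then have "exp (c * \<tau>) * (C * \<tau> powr - p) \<le> \<Psi>' \<tau>"
      unfolding \<Psi>'_def using c C \<tau>(1) by (rule exp_powr_deriv_lower_bound)
    moreover have "exp (c * \<tau>) * h \<tau> \<le> exp (c * \<tau>) * (C * \<tau> powr - p)"
      using bound[OF \<tau>(2)] by simp
    ultimately show ?thesis
      by linarith
  qed
  ultimately have "integral {T..t} (\<lambda>\<tau>. exp (c * \<tau>) * h \<tau>) \<le> \<Psi> t - \<Psi> T"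
    by (intro has_integral_le[OF integrable_integral[OF integrable_exp_weighted[OF cont order_refl]]]) auto
  also have "\<dots> \<le> \<Psi> t"
    using C c by (simp add: \<Psi>_def)
  finally have "exp (- c * t) * integral {T..t} (\<lambda>\<tau>. exp (c * \<tau>) * h \<tau>) \<le> exp (- c * t) * \<Psi> t"
    by simp
  also have "\<dots> = 2 * C / c * t powr - p"
    by (simp add: \<Psi>_def mult.assoc[symmetric] exp_add[symmetric] mult.commute[of "exp (- c * t)"])
  finally show ?thesis
    unfolding exp_convolution_def .
qed

lemma exp_convolution_bigo:
  fixes h :: "real \<Rightarrow> real"
  assumes c: "c > 0" and p: "p > 0" and cont: "continuous_on {a..} h"
    and nonneg: "\<And>\<tau>. a \<le> \<tau> \<Longrightarrow> 0 \<le> h \<tau>" and h: "h \<in> O(\<lambda>t. 1 / t powr p)"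
  shows "exp_convolution c a h \<in> O(\<lambda>t. 1 / t powr p)"
proof -
  obtain C where C: "C > 0" and "\<forall>\<^sub>F t in at_top. norm (h t) \<le> C * norm (1 / t powr p)"
    using landau_o.bigE[OF h] by blast
  then obtain N where N: "\<And>t. N \<le> t \<Longrightarrow> norm (h t) \<le> C * norm (1 / t powr p)"
    unfolding eventually_at_top_linorder by blast
  define T where "T = max a (max N (max 1 (2 * p / c)))"
  have "2 * p / c \<le> T"
    by (simp add: T_def)
  then have T: "a \<le> T" "N \<le> T" "T > 0" "2 * p \<le> c * T"
    using c by (auto simp: T_def pos_divide_le_eq mult.commute)
  have bound: "exp_convolution c a h t
      \<le> exp_convolution c a h T * exp (- c * (t - T)) + 2 * C / c * (1 / t powr p)"
    if t: "T \<le> t" for t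
  proof -
    have "exp_convolution c T h t \<le> 2 * C / c * t powr - p"
    proof (rule exp_convolution_powr_bound[OF c p _ T(3,4) _ _ t])
      show "continuous_on {T..} h"
        by (rule continuous_on_subset[OF cont]) (use T in auto)
      show "h \<tau> \<le> C * \<tau> powr - p" if "T \<le> \<tau>" for \<tau>
        using N[of \<tau>] that T by (simp add: powr_minus_divide)
    qed (use C in auto)
    moreover have "2 * C / c * t powr - p = 2 * C / c * (1 / t powr p)"
      by (simp add: powr_minus_divide)
    ultimately show ?thesis
      using exp_convolution_split[OF cont T(1) t, of c] by (simp add: mult.commute)
  qed
  have "\<forall>\<^sub>F t in at_top. 0 \<le> exp_convolution c a h t \<and>
      exp_convolution c a h t \<le> exp_convolution c a h T * exp (- c * (t - T)) + 2 * C / c * (1 / t powr p)"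
    using eventually_ge_at_top[of T]
    by eventually_elim (use bound exp_convolution_nonneg[OF cont nonneg] in blast)
  moreover have "(\<lambda>t. exp_convolution c a h T * exp (- c * (t - T)) + 2 * C / c * (1 / t powr p))
      \<in> O(\<lambda>t. 1 / t powr p)"
  proof (intro sum_in_bigo(1) bigo_const_mult)
    show "(\<lambda>t. exp (- c * (t - T))) \<in> O(\<lambda>t. 1 / t powr p)"
      using c p by real_asymp
  qed simp
  ultimately show ?thesis
    by (rule bigo_of_eventually_le)
qed

lemma exp_convolution_linear_differential_ineq:
  fixes u u' q r :: "real \<Rightarrow> real"
  assumes deriv: "\<And>\<tau>. a \<le> \<tau> \<Longrightarrow> (u has_real_derivative u' \<tau>) (at \<tau> within {a..})"
    and ineq: "\<And>\<tau>. a \<le> \<tau> \<Longrightarrow> u' \<tau> + c * u \<tau> + q \<tau> \<le> r \<tau>"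
    and q: "continuous_on {a..} q" and r: "continuous_on {a..} r" and t: "a \<le> t"
  shows "u t + exp_convolution c a q t \<le> u a * exp (- c * (t - a)) + exp_convolution c a r t"
proof -
  define w where "w \<tau> = exp (c * \<tau>) * u \<tau>" for \<tau>
  define w' where "w' \<tau> = exp (c * \<tau>) * (u' \<tau> + c * u \<tau>)" for \<tau>
  have "(w has_vector_derivative w' \<tau>) (at \<tau> within {a..t})" if "\<tau> \<in> {a..t}" for \<tau>
  proof -
    have "(u has_real_derivative u' \<tau>) (at \<tau> within {a..t})"
      using that by (intro DERIV_subset[OF deriv]) auto
    then have "(w has_real_derivative w' \<tau>) (at \<tau> within {a..t})"
      unfolding w_def w'_def by (auto intro!: derivative_eq_intros simp: algebra_simps)
    then show ?thesis
      by (simp add: has_real_derivative_iff_has_vector_derivative)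
  qed
  then have "(w' has_integral (w t - w a)) {a..t}"
    by (rule fundamental_theorem_of_calculus[OF t])
  moreover have "((\<lambda>\<tau>. exp (c * \<tau>) * r \<tau> - exp (c * \<tau>) * q \<tau>) has_integral
      integral {a..t} (\<lambda>\<tau>. exp (c * \<tau>) * r \<tau>) - integral {a..t} (\<lambda>\<tau>. exp (c * \<tau>) * q \<tau>)) {a..t}"
    by (intro has_integral_diff integrable_integral integrable_exp_weighted[OF q order_refl]
        integrable_exp_weighted[OF r order_refl])
  moreover have "w' \<tau> \<le> exp (c * \<tau>) * r \<tau> - exp (c * \<tau>) * q \<tau>" if "\<tau> \<in> {a..t}" for \<tau>
    using ineq[of \<tau>] that unfolding w'_def right_diff_distrib[symmetric]
    by (intro mult_left_mono) auto
  ultimately have "w t - w a \<le> integral {a..t} (\<lambda>\<tau>. exp (c * \<tau>) * r \<tau>)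
      - integral {a..t} (\<lambda>\<tau>. exp (c * \<tau>) * q \<tau>)"
    by (rule has_integral_le)
  then have "exp (- c * t) * (w t + integral {a..t} (\<lambda>\<tau>. exp (c * \<tau>) * q \<tau>))
      \<le> exp (- c * t) * (w a + integral {a..t} (\<lambda>\<tau>. exp (c * \<tau>) * r \<tau>))"
    by (intro mult_left_mono) auto
  moreover have "exp (- c * t) * w t = u t" "exp (- c * t) * w a = u a * exp (- c * (t - a))"
    by (simp_all add: w_def mult.assoc[symmetric] exp_add[symmetric] right_diff_distrib)
  ultimately show ?thesis
    unfolding exp_convolution_def distrib_left by linarith
qed

lemma sqrt_le_of_deriv_le_sqrt:
  fixes u u' g :: "real \<Rightarrow> real"
  assumes deriv: "\<And>\<tau>. a \<le> \<tau> \<Longrightarrow> (u has_real_derivative u' \<tau>) (at \<tau> within {a..})"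
    and u: "\<And>\<tau>. a \<le> \<tau> \<Longrightarrow> 0 \<le> u \<tau>" and u': "\<And>\<tau>. a \<le> \<tau> \<Longrightarrow> u' \<tau> \<le> sqrt (2 * u \<tau>) * g \<tau>"
    and g: "\<And>\<tau>. a \<le> \<tau> \<Longrightarrow> 0 \<le> g \<tau>" "continuous_on {a..} g" and t: "a \<le> t"
  shows "sqrt (2 * u t) \<le> sqrt (2 * u a) + integral {a..t} g"
proof (rule field_le_epsilon)
  fix \<delta> :: real
  assume "\<delta> > 0"
  \<comment> \<open>\<open>\<delta>\<close> keeps the square root differentiable where \<open>u\<close> vanishes.\<close>
  define \<psi> where "\<psi> \<tau> = sqrt (2 * u \<tau> + \<delta>\<^sup>2)" for \<tau>
  have \<psi>_pos: "\<psi> \<tau> > 0" if "a \<le> \<tau>" for \<tau>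
    using u[OF that] \<open>\<delta> > 0\<close> by (simp add: \<psi>_def add_nonneg_pos)
  have "(\<psi> has_vector_derivative u' \<tau> / \<psi> \<tau>) (at \<tau> within {a..t})" if "\<tau> \<in> {a..t}" for \<tau>
  proof -
    have "(u has_real_derivative u' \<tau>) (at \<tau> within {a..t})"
      using that by (intro DERIV_subset[OF deriv]) auto
    then have "(\<psi> has_real_derivative u' \<tau> / \<psi> \<tau>) (at \<tau> within {a..t})"
      unfolding \<psi>_def using \<psi>_pos[of \<tau>] that
      by (auto intro!: derivative_eq_intros simp: \<psi>_def field_simps)
    then show ?thesis
      by (simp add: has_real_derivative_iff_has_vector_derivative)
  qed
  then have "((\<lambda>\<tau>. u' \<tau> / \<psi> \<tau>) has_integral (\<psi> t - \<psi> a)) {a..t}"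
    by (rule fundamental_theorem_of_calculus[OF t])
  moreover have "g integrable_on {a..t}"
    by (intro integrable_continuous_interval continuous_on_subset[OF g(2)]) auto
  moreover have "u' \<tau> / \<psi> \<tau> \<le> g \<tau>" if "\<tau> \<in> {a..t}" for \<tau>
  proof -
    have "sqrt (2 * u \<tau>) * g \<tau> \<le> \<psi> \<tau> * g \<tau>"
      using g(1)[of \<tau>] that by (intro mult_right_mono) (auto simp: \<psi>_def)
    then have "u' \<tau> \<le> \<psi> \<tau> * g \<tau>"
      using u'[of \<tau>] that by auto
    then show ?thesis
      using \<psi>_pos[of \<tau>] that by (simp add: divide_le_eq mult.commute)
  qed
  ultimately have "\<psi> t - \<psi> a \<le> integral {a..t} g"
    by (intro has_integral_le[OF _ integrable_integral]) auto
  moreover have "sqrt (2 * u t) \<le> \<psi> t" "\<psi> a \<le> sqrt (2 * u a) + \<delta>"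
    using u[OF t] u[OF order_refl] \<open>\<delta> > 0\<close> sqrt_add_le_add_sqrt[of "2 * u a" "\<delta>\<^sup>2"]
    by (auto simp: \<psi>_def)
  ultimately show "sqrt (2 * u t) \<le> sqrt (2 * u a) + integral {a..t} g + \<delta>"
    by linarith
qed

locale hessian_damped_trajectory =
  fixes f :: "'a::{real_inner, complete_space} \<Rightarrow> real"
    and gradf :: "'a \<Rightarrow> 'a"
    and hessf :: "'a \<Rightarrow> ('a \<Rightarrow>\<^sub>L 'a)"
    and xstar :: 'a
    and \<mu> \<beta> t0 :: real
    and e e' x x' x'' :: "real \<Rightarrow> 'a"
  assumes grad: "\<And>y. (f has_derivative (\<lambda>h. gradf y \<bullet> h)) (at y)"
    and hess: "\<And>y. (gradf has_derivative blinfun_apply (hessf y)) (at y)"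
    and hess_cont: "continuous_on UNIV hessf"
    and mu_pos: "\<mu> > 0"
    and strong: "strongly_convex_on UNIV \<mu> f"
    and minimizer: "\<And>y. f xstar \<le> f y"
    and e_deriv: "\<And>t. t \<ge> t0 \<Longrightarrow> (e has_vector_derivative e' t) (at t within {t0..})"
    and e'_cont: "continuous_on {t0..} e'"
    and x_deriv: "\<And>t. t \<ge> t0 \<Longrightarrow> (x has_vector_derivative x' t) (at t within {t0..})"
    and x'_deriv: "\<And>t. t \<ge> t0 \<Longrightarrow> (x' has_vector_derivative x'' t) (at t within {t0..})"
    and ode: "\<And>t. t \<ge> t0 \<Longrightarrow>
       x'' t + (2 * sqrt \<mu>) *\<^sub>R x' t + \<beta> *\<^sub>R hessf (x t) (x' t) + \<beta> *\<^sub>R e' t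
         + gradf (x t) + e t = 0"
    and beta: "0 \<le> \<beta>" "\<beta> \<le> 1 / (2 * sqrt \<mu>)"
    and e_int: "(\<lambda>t. norm (e t)) integrable_on {t0..}"
    and e'_int: "(\<lambda>t. norm (e' t)) integrable_on {t0..}"
begin

abbreviation "E \<equiv> energy f gradf xstar \<mu> \<beta> x x'"

definition "v t = sqrt \<mu> *\<^sub>R (x t - xstar) + x' t + \<beta> *\<^sub>R gradf (x t)"

definition "g t = e t + \<beta> *\<^sub>R e' t"

definition "M = sqrt (2 * E t0) + integral {t0..} (\<lambda>\<tau>. norm (g \<tau>))"

lemma beta_sqrt_mu: "\<beta> * sqrt \<mu> \<le> 1 / 2"
  using beta(2) mu_pos by (simp add: le_divide_eq)

lemma gradf_xstar: "gradf xstar = 0"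
proof -
  have "(\<lambda>h. gradf xstar \<bullet> h) = (\<lambda>h. 0)"
    by (rule differential_zero_maxmin[of xstar UNIV f]) (use grad minimizer in auto)
  then show ?thesis
    by (metis inner_eq_zero_iff)
qed

lemma gradf_tangent: "gradf y \<bullet> (z - y) + \<mu> / 2 * (norm (z - y))\<^sup>2 \<le> f z - f y"
  by (rule strongly_convex_on_UNIV_imp_above_tangent[OF strong grad])

lemma energy_eq: "E t = f (x t) - f xstar + (norm (v t))\<^sup>2 / 2"
  by (simp add: energy_def v_def)

lemma energy_nonneg: "0 \<le> E t"
  using minimizer[of "x t"] by (simp add: energy_eq)

lemma gap_le_energy: "f (x t) - f xstar \<le> E t"
  by (simp add: energy_eq)

lemma norm_v_le_energy: "norm (v t) \<le> sqrt (2 * E t)"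
  using minimizer[of "x t"] by (intro real_le_rsqrt) (simp add: energy_eq)

lemma dist_xstar_le_energy: "sqrt \<mu> * norm (x t - xstar) \<le> sqrt (2 * E t)"
proof (rule real_le_rsqrt)
  have "\<mu> / 2 * (norm (x t - xstar))\<^sup>2 \<le> E t"
    using gradf_tangent[of xstar "x t"] gap_le_energy[of t] by (simp add: gradf_xstar)
  then show "(sqrt \<mu> * norm (x t - xstar))\<^sup>2 \<le> 2 * E t"
    using mu_pos by (simp add: power_mult_distrib)
qed

lemma norm_x'_le:
  "norm (x' t) \<le> norm (v t) + sqrt \<mu> * norm (x t - xstar) + \<beta> * norm (gradf (x t))"
proof -
  have "x' t = v t - sqrt \<mu> *\<^sub>R (x t - xstar) - \<beta> *\<^sub>R gradf (x t)"
    by (simp add: v_def)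
  then have "norm (x' t) \<le> norm (v t) + norm (sqrt \<mu> *\<^sub>R (x t - xstar)) + norm (\<beta> *\<^sub>R gradf (x t))"
    by (metis norm_triangle_ineq4 add_right_mono order_trans)
  then show ?thesis
    using mu_pos beta(1) by simp
qed

lemma gradf_isCont: "isCont gradf y"
  using hess[of y] by (rule has_derivative_continuous)

lemma continuous_on_x: "continuous_on {t0..} x"
  using x_deriv by (auto intro: has_vector_derivative_continuous simp: continuous_on_eq_continuous_within)

lemma continuous_on_gradf_x: "continuous_on {t0..} (\<lambda>t. gradf (x t))"
  by (rule continuous_on_compose2[OF _ continuous_on_x, of UNIV])
    (auto intro: continuous_at_imp_continuous_on gradf_isCont)

lemma continuous_on_g: "continuous_on {t0..} g"
proof -
  have "continuous_on {t0..} e"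
    using e_deriv by (auto intro: has_vector_derivative_continuous simp: continuous_on_eq_continuous_within)
  then show ?thesis
    unfolding g_def by (intro continuous_intros e'_cont)
qed

lemma norm_g_integrable: "(\<lambda>t. norm (g t)) integrable_on {t0..}"
proof (rule measurable_bounded_by_integrable_imp_integrable)
  show "(\<lambda>t. norm (g t)) \<in> borel_measurable (lebesgue_on {t0..})"
    using continuous_on_g by (intro continuous_imp_measurable_on_sets_lebesgue continuous_intros) auto
  show "(\<lambda>t. norm (e t) + \<beta> * norm (e' t)) integrable_on {t0..}"
    using integrable_add[OF e_int integrable_on_cmult_left[OF e'_int, of \<beta>]] by simp
  show "norm (norm (g t)) \<le> norm (e t) + \<beta> * norm (e' t)" for t
    unfolding g_def using beta(1) norm_triangle_ineq[of "e t" "\<beta> *\<^sub>R e' t"] by simp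
qed simp

definition "E' t = gradf (x t) \<bullet> x' t - v t \<bullet> (sqrt \<mu> *\<^sub>R x' t + gradf (x t) + g t)"

lemma v_has_vector_derivative:
  assumes "t0 \<le> t"
  shows "(v has_vector_derivative - (sqrt \<mu> *\<^sub>R x' t + gradf (x t) + g t)) (at t within {t0..})"
proof -
  have x: "(x has_derivative (\<lambda>h. h *\<^sub>R x' t)) (at t within {t0..})"
    using x_deriv[OF assms] by (simp add: has_vector_derivative_def)
  have "((\<lambda>t. gradf (x t)) has_vector_derivative hessf (x t) (x' t)) (at t within {t0..})"
    using diff_chain_within[OF x has_derivative_at_withinI[OF hess]]
    by (simp add: has_vector_derivative_def o_def blinfun.scaleR_right)
  then have "(v has_vector_derivative sqrt \<mu> *\<^sub>R x' t + x'' t + \<beta> *\<^sub>R hessf (x t) (x' t))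
      (at t within {t0..})"
    unfolding v_def using x_deriv[OF assms] x'_deriv[OF assms]
    by (auto intro!: derivative_eq_intros)
  moreover have "(2 * sqrt \<mu>) *\<^sub>R x' t = sqrt \<mu> *\<^sub>R x' t + sqrt \<mu> *\<^sub>R x' t"
    by (metis mult_2 scaleR_add_left)
  then have "sqrt \<mu> *\<^sub>R x' t + x'' t + \<beta> *\<^sub>R hessf (x t) (x' t)
      = - (sqrt \<mu> *\<^sub>R x' t + gradf (x t) + g t)"
    using ode[OF assms] unfolding g_def by (simp add: algebra_simps eq_neg_iff_add_eq_0)
  ultimately show ?thesis
    by simp
qed

lemma energy_has_derivative:
  assumes "t0 \<le> t"
  shows "(E has_real_derivative E' t) (at t within {t0..})"
proof -
  have "(x has_derivative (\<lambda>h. h *\<^sub>R x' t)) (at t within {t0..})"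
    using x_deriv[OF assms] by (simp add: has_vector_derivative_def)
  from diff_chain_within[OF this has_derivative_at_withinI[OF grad]]
  have fx: "((\<lambda>t. f (x t)) has_real_derivative gradf (x t) \<bullet> x' t) (at t within {t0..})"
    by (simp add: has_field_derivative_def o_def mult_commute_abs)
  have "(v has_derivative (\<lambda>h. h *\<^sub>R - (sqrt \<mu> *\<^sub>R x' t + gradf (x t) + g t))) (at t within {t0..})"
    using v_has_vector_derivative[OF assms] by (simp add: has_vector_derivative_def)
  from has_derivative_eq_rhs[OF has_derivative_inner[OF this this]]
  have vv: "((\<lambda>t. v t \<bullet> v t) has_real_derivative
      - 2 * (v t \<bullet> (sqrt \<mu> *\<^sub>R x' t + gradf (x t) + g t))) (at t within {t0..})"
    unfolding has_field_derivative_def by (simp add: fun_eq_iff inner_commute algebra_simps)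
  have "((\<lambda>t. f (x t) - f xstar + 1 / 2 * (v t \<bullet> v t)) has_real_derivative
      gradf (x t) \<bullet> x' t - 0 + 1 / 2 * (- 2 * (v t \<bullet> (sqrt \<mu> *\<^sub>R x' t + gradf (x t) + g t))))
      (at t within {t0..})"
    by (intro DERIV_add DERIV_diff DERIV_cmult fx vv DERIV_const)
  moreover have "E = (\<lambda>t. f (x t) - f xstar + 1 / 2 * (v t \<bullet> v t))"
    by (simp add: fun_eq_iff energy_eq power2_norm_eq_inner)
  ultimately show ?thesis
    by (simp add: E'_def)
qed

lemma energy_dissipation:
  "E' t + sqrt \<mu> / 2 * E t + \<beta> / 4 * (norm (gradf (x t)))\<^sup>2 \<le> sqrt (2 * E t) * norm (g t)"
proof -
  have "f (x t) - f xstar + (sqrt \<mu>)\<^sup>2 / 2 * (norm (x t - xstar))\<^sup>2 \<le> (x t - xstar) \<bullet> gradf (x t)"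
    using gradf_tangent[of "x t" xstar] mu_pos by (simp add: norm_minus_commute inner_diff_right inner_commute)
  from unperturbed_energy_dissipation[OF _ beta(1) _ _ this, of "x' t"] mu_pos beta_sqrt_mu minimizer[of "x t"]
  have "E' t + sqrt \<mu> / 2 * E t + \<beta> / 4 * (norm (gradf (x t)))\<^sup>2 \<le> - (v t \<bullet> g t)"
    by (simp add: E'_def energy_eq v_def inner_add_right algebra_simps)
  also have "\<dots> \<le> norm (v t) * norm (g t)"
    using Cauchy_Schwarz_ineq2[of "v t" "g t"] by linarith
  also have "\<dots> \<le> sqrt (2 * E t) * norm (g t)"
    by (intro mult_right_mono norm_v_le_energy) simp
  finally show ?thesis .
qed

lemma sqrt_energy_le_M:
  assumes "t0 \<le> t"
  shows "sqrt (2 * E t) \<le> M"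
proof -
  have "E' \<tau> \<le> sqrt (2 * E \<tau>) * norm (g \<tau>)" for \<tau>
  proof -
    have "0 \<le> sqrt \<mu> / 2 * E \<tau>" "0 \<le> \<beta> / 4 * (norm (gradf (x \<tau>)))\<^sup>2"
      using energy_nonneg[of \<tau>] beta(1) mu_pos by simp_all
    then show ?thesis
      using energy_dissipation[of \<tau>] by linarith
  qed
  then have "sqrt (2 * E t) \<le> sqrt (2 * E t0) + integral {t0..t} (\<lambda>\<tau>. norm (g \<tau>))"
    using energy_has_derivative energy_nonneg continuous_on_g assms
    by (intro sqrt_le_of_deriv_le_sqrt) (auto intro: continuous_intros)
  also have "\<dots> \<le> M"
    unfolding M_def using assms continuous_on_g
    by (intro add_left_mono integral_subset_le norm_g_integrable integrable_continuous_interval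
        continuous_on_norm continuous_on_subset[OF continuous_on_g]) auto
  finally show ?thesis .
qed

lemma energy_bound:
  assumes "t0 \<le> t"
  shows "E t + \<beta> / 4 * exp_convolution (sqrt \<mu> / 2) t0 (\<lambda>\<tau>. (norm (gradf (x \<tau>)))\<^sup>2) t
    \<le> E t0 * exp (- (sqrt \<mu> / 2) * (t - t0)) + M * exp_convolution (sqrt \<mu> / 2) t0 (\<lambda>\<tau>. norm (g \<tau>)) t"
proof -
  have dissipation: "E' \<tau> + sqrt \<mu> / 2 * E \<tau> + \<beta> / 4 * (norm (gradf (x \<tau>)))\<^sup>2 \<le> M * norm (g \<tau>)"
    if "t0 \<le> \<tau>" for \<tau>
    using energy_dissipation[of \<tau>] mult_right_mono[OF sqrt_energy_le_M[OF that], of "norm (g \<tau>)"]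
    by simp
  have continuous: "continuous_on {t0..} (\<lambda>\<tau>. \<beta> / 4 * (norm (gradf (x \<tau>)))\<^sup>2)"
    "continuous_on {t0..} (\<lambda>\<tau>. M * norm (g \<tau>))"
    by (intro continuous_intros continuous_on_gradf_x continuous_on_g)+
  have "E t + exp_convolution (sqrt \<mu> / 2) t0 (\<lambda>\<tau>. \<beta> / 4 * (norm (gradf (x \<tau>)))\<^sup>2) t
    \<le> E t0 * exp (- (sqrt \<mu> / 2) * (t - t0)) + exp_convolution (sqrt \<mu> / 2) t0 (\<lambda>\<tau>. M * norm (g \<tau>)) t"
    by (rule exp_convolution_linear_differential_ineq[OF energy_has_derivative dissipation])
      (simp_all only: assms continuous)
  then show ?thesis
    by (simp only: exp_convolution_cmult)
qed

lemma energy_estimate: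
  assumes "t0 \<le> t"
  shows "E t \<le> E t0 * exp (- (sqrt \<mu> / 2) * (t - t0)) + M * exp_convolution (sqrt \<mu> / 2) t0 (\<lambda>\<tau>. norm (g \<tau>)) t"
proof -
  have "0 \<le> exp_convolution (sqrt \<mu> / 2) t0 (\<lambda>\<tau>. (norm (gradf (x \<tau>)))\<^sup>2) t"
    using continuous_on_gradf_x by (intro exp_convolution_nonneg continuous_intros) auto
  then have "0 \<le> \<beta> / 4 * exp_convolution (sqrt \<mu> / 2) t0 (\<lambda>\<tau>. (norm (gradf (x \<tau>)))\<^sup>2) t"
    using beta(1) by simp
  then show ?thesis
    using energy_bound[OF assms] by linarith
qed

definition "majorant t =
  E t0 * exp (- (sqrt \<mu> / 2) * (t - t0)) + M * exp_convolution (sqrt \<mu> / 2) t0 (\<lambda>\<tau>. norm (g \<tau>)) t"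

lemma energy_le_majorant: "\<forall>\<^sub>F t in at_top. 0 \<le> E t \<and> E t \<le> majorant t"
  using eventually_ge_at_top[of t0]
proof eventually_elim
  case (elim t)
  show ?case
    using energy_nonneg[of t] energy_estimate[OF elim] by (simp add: majorant_def)
qed

lemma majorant_tendsto_zero: "(majorant \<longlongrightarrow> 0) at_top"
proof -
  have "((\<lambda>t. exp (- (sqrt \<mu> / 2) * (t - t0))) \<longlongrightarrow> 0) at_top"
    using mu_pos by real_asymp
  moreover have "(exp_convolution (sqrt \<mu> / 2) t0 (\<lambda>\<tau>. norm (g \<tau>)) \<longlongrightarrow> 0) at_top"
    using mu_pos continuous_on_g norm_g_integrable
    by (intro exp_convolution_tendsto_zero continuous_intros) auto
  ultimately have "(majorant \<longlongrightarrow> E t0 * 0 + M * 0) at_top"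
    unfolding majorant_def by (intro tendsto_intros)
  then show ?thesis
    by simp
qed

lemma majorant_bigo:
  assumes "p > 0" and "(\<lambda>t. norm (g t)) \<in> O(\<lambda>t. 1 / t powr p)"
  shows "majorant \<in> O(\<lambda>t. 1 / t powr p)"
  unfolding majorant_def
proof (intro sum_in_bigo(1) bigo_const_mult)
  show "(\<lambda>t. exp (- (sqrt \<mu> / 2) * (t - t0))) \<in> O(\<lambda>t. 1 / t powr p)"
    using mu_pos assms(1) by real_asymp
  show "exp_convolution (sqrt \<mu> / 2) t0 (\<lambda>\<tau>. norm (g \<tau>)) \<in> O(\<lambda>t. 1 / t powr p)"
    using mu_pos continuous_on_g assms by (intro exp_convolution_bigo continuous_intros) auto
qed

lemma energy_tendsto_zero: "(E \<longlongrightarrow> 0) at_top"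
  using energy_le_majorant
  by (intro tendsto_sandwich[OF _ _ tendsto_const majorant_tendsto_zero]) (auto elim: eventually_mono)

lemma sqrt_energy_tendsto_zero: "((\<lambda>t. sqrt (2 * E t)) \<longlongrightarrow> 0) at_top"
  using tendsto_real_sqrt[OF tendsto_mult_right_zero[OF energy_tendsto_zero, of 2]]
  by (simp add: mult.commute)

lemma objective_tendsto_min: "((\<lambda>t. f (x t)) \<longlongrightarrow> f xstar) at_top"
proof -
  have "((\<lambda>t. f (x t) - f xstar) \<longlongrightarrow> 0) at_top"
    using minimizer gap_le_energy
    by (intro tendsto_sandwich[OF _ _ tendsto_const energy_tendsto_zero]) (auto simp: algebra_simps)
  then show ?thesis
    by (simp add: LIM_zero_iff)
qed

lemma dist_xstar_tendsto_zero: "((\<lambda>t. norm (x t - xstar)) \<longlongrightarrow> 0) at_top"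
proof (rule tendsto_sandwich[OF _ _ tendsto_const])
  show "((\<lambda>t. sqrt (2 * E t) / sqrt \<mu>) \<longlongrightarrow> 0) at_top"
    using tendsto_divide_zero[OF sqrt_energy_tendsto_zero] by simp
  show "\<forall>\<^sub>F t in at_top. norm (x t - xstar) \<le> sqrt (2 * E t) / sqrt \<mu>"
    using dist_xstar_le_energy mu_pos by (simp add: pos_le_divide_eq mult.commute)
qed simp

lemma gradf_tendsto_zero: "((\<lambda>t. norm (gradf (x t))) \<longlongrightarrow> 0) at_top"
proof -
  have "(x \<longlongrightarrow> xstar) at_top"
    using dist_xstar_tendsto_zero by (simp add: tendsto_norm_zero_iff LIM_zero_iff)
  from isCont_tendsto_compose[OF gradf_isCont this]
  show ?thesis
    by (simp add: gradf_xstar tendsto_norm_zero)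
qed

lemma velocity_tendsto_zero: "((\<lambda>t. norm (x' t)) \<longlongrightarrow> 0) at_top"
proof (rule tendsto_sandwich[OF _ _ tendsto_const])
  have "((\<lambda>t. sqrt (2 * E t) + sqrt \<mu> * norm (x t - xstar) + \<beta> * norm (gradf (x t)))
      \<longlongrightarrow> 0 + sqrt \<mu> * 0 + \<beta> * 0) at_top"
    by (intro tendsto_intros sqrt_energy_tendsto_zero dist_xstar_tendsto_zero gradf_tendsto_zero)
  then show "((\<lambda>t. sqrt (2 * E t) + sqrt \<mu> * norm (x t - xstar) + \<beta> * norm (gradf (x t)))
      \<longlongrightarrow> 0) at_top"
    by simp
  have "norm (x' t) \<le> sqrt (2 * E t) + sqrt \<mu> * norm (x t - xstar) + \<beta> * norm (gradf (x t))" for t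
    using norm_x'_le[of t] norm_v_le_energy[of t] by linarith
  then show "\<forall>\<^sub>F t in at_top. norm (x' t)
      \<le> sqrt (2 * E t) + sqrt \<mu> * norm (x t - xstar) + \<beta> * norm (gradf (x t))"
    by simp
qed simp

lemma eventually_velocity_le_energy:
  obtains Q where "\<forall>\<^sub>F t in at_top. norm (x' t) \<le> Q * sqrt (2 * E t)"
proof -
  have "isCont hessf xstar"
    using hess_cont by (simp add: continuous_on_eq_continuous_at)
  then obtain r L where "r > 0" and lip: "L-lipschitz_on (ball xstar r) gradf"
    using continuous_derivative_imp_local_lipschitz[OF hess] by blast
  have "\<forall>\<^sub>F t in at_top. norm (x t - xstar) < r"
    using dist_xstar_tendsto_zero \<open>r > 0\<close> by (simp add: order_tendsto_iff)
  then have "\<forall>\<^sub>F t in at_top. norm (x' t) \<le> (2 + \<beta> * L / sqrt \<mu>) * sqrt (2 * E t)"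
  proof eventually_elim
    case (elim t)
    have "norm (gradf (x t)) \<le> L * norm (x t - xstar)"
      using lipschitz_on_normD[OF lip, of "x t" xstar] elim \<open>r > 0\<close>
      by (simp add: gradf_xstar dist_norm norm_minus_commute)
    then have "\<beta> * norm (gradf (x t)) \<le> \<beta> * L / sqrt \<mu> * (sqrt \<mu> * norm (x t - xstar))"
      using beta(1) mu_pos by (simp add: mult_left_mono)
    also have "\<dots> \<le> \<beta> * L / sqrt \<mu> * sqrt (2 * E t)"
      by (intro mult_left_mono dist_xstar_le_energy) (use lipschitz_on_nonneg[OF lip] beta(1) mu_pos in auto)
    finally show ?case
      using norm_x'_le[of t] norm_v_le_energy[of t] dist_xstar_le_energy[of t]
      by (simp add: distrib_right)
  qed
  then show ?thesis
    by (rule that)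
qed

context
  fixes p :: real
  assumes p: "p > 0" and perturbation_rate: "(\<lambda>t. norm (g t)) \<in> O(\<lambda>t. 1 / t powr p)"
begin

lemma energy_bigo: "E \<in> O(\<lambda>t. 1 / t powr p)"
  by (rule bigo_of_eventually_le[OF energy_le_majorant majorant_bigo[OF p perturbation_rate]])

lemma bigo_of_le_energy:
  fixes h :: "real \<Rightarrow> real"
  assumes "\<forall>\<^sub>F t in at_top. 0 \<le> h t \<and> h t \<le> K * E t"
  shows "h \<in> O(\<lambda>t. 1 / t powr p)"
  by (rule bigo_of_eventually_le[OF assms bigo_const_mult[OF energy_bigo]])

lemma gap_bigo: "(\<lambda>t. f (x t) - f xstar) \<in> O(\<lambda>t. 1 / t powr p)"
  by (rule bigo_of_le_energy[of _ 1]) (simp add: minimizer gap_le_energy)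

lemma dist_xstar_sq_bigo: "(\<lambda>t. (norm (x t - xstar))\<^sup>2) \<in> O(\<lambda>t. 1 / t powr p)"
proof (rule bigo_of_le_energy[of _ "2 / \<mu>"])
  have "(sqrt \<mu> * norm (x t - xstar))\<^sup>2 \<le> 2 * E t" for t
    using dist_xstar_le_energy[of t] energy_nonneg[of t] mu_pos
    by (metis mult_nonneg_nonneg norm_ge_zero real_sqrt_ge_zero power_mono real_sqrt_pow2 zero_le_numeral less_imp_le)
  then show "\<forall>\<^sub>F t in at_top. 0 \<le> (norm (x t - xstar))\<^sup>2 \<and> (norm (x t - xstar))\<^sup>2 \<le> 2 / \<mu> * E t"
    using mu_pos by (simp add: power_mult_distrib field_simps)
qed

lemma velocity_sq_bigo: "(\<lambda>t. (norm (x' t))\<^sup>2) \<in> O(\<lambda>t. 1 / t powr p)"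
proof -
  obtain Q where Q: "\<forall>\<^sub>F t in at_top. norm (x' t) \<le> Q * sqrt (2 * E t)"
    by (rule eventually_velocity_le_energy)
  show ?thesis
  proof (rule bigo_of_le_energy[of _ "2 * Q\<^sup>2"])
    show "\<forall>\<^sub>F t in at_top. 0 \<le> (norm (x' t))\<^sup>2 \<and> (norm (x' t))\<^sup>2 \<le> 2 * Q\<^sup>2 * E t"
      using Q
    proof eventually_elim
      case (elim t)
      then have "(norm (x' t))\<^sup>2 \<le> (Q * sqrt (2 * E t))\<^sup>2"
        by (intro power_mono) auto
      then show ?case
        using energy_nonneg[of t] by (simp add: power_mult_distrib)
    qed
  qed
qed

lemma gradient_integral_bigo:
  assumes "\<beta> > 0"
  shows "exp_convolution (sqrt \<mu>) t0 (\<lambda>s. (norm (gradf (x s)))\<^sup>2) \<in> O(\<lambda>t. 1 / t powr p)"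
proof -
  have cont: "continuous_on {t0..} (\<lambda>s. (norm (gradf (x s)))\<^sup>2)"
    by (intro continuous_intros continuous_on_gradf_x)
  have "\<forall>\<^sub>F t in at_top. 0 \<le> exp_convolution (sqrt \<mu>) t0 (\<lambda>s. (norm (gradf (x s)))\<^sup>2) t
      \<and> exp_convolution (sqrt \<mu>) t0 (\<lambda>s. (norm (gradf (x s)))\<^sup>2) t \<le> 4 / \<beta> * majorant t"
    using eventually_ge_at_top[of t0]
  proof eventually_elim
    case (elim t)
    have "exp_convolution (sqrt \<mu>) t0 (\<lambda>s. (norm (gradf (x s)))\<^sup>2) t
        \<le> exp_convolution (sqrt \<mu> / 2) t0 (\<lambda>s. (norm (gradf (x s)))\<^sup>2) t"
      using mu_pos by (intro exp_convolution_antimono_rate cont) auto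
    also have "\<dots> \<le> 4 / \<beta> * majorant t"
      using energy_bound[OF elim] energy_nonneg[of t] assms
      by (simp add: majorant_def field_simps)
    finally show ?case
      using exp_convolution_nonneg[OF cont] by simp
  qed
  then show ?thesis
    by (rule bigo_of_eventually_le[OF _ bigo_const_mult[OF majorant_bigo[OF p perturbation_rate]]])
qed

end

end

theorem theorem9:
  fixes f :: "'a::{real_inner, complete_space} \<Rightarrow> real"
    and gradf :: "'a \<Rightarrow> 'a"
    and hessf :: "'a \<Rightarrow> ('a \<Rightarrow>\<^sub>L 'a)"
    and xstar :: 'a
    and \<mu> \<beta> t0 :: real
    and e e' x x' x'' :: "real \<Rightarrow> 'a"
  assumes t0_pos: "t0 > 0"
    and grad: "\<And>y. (f has_derivative (\<lambda>h. gradf y \<bullet> h)) (at y)"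
    and hess: "\<And>y. (gradf has_derivative blinfun_apply (hessf y)) (at y)"
    and hess_cont: "continuous_on UNIV hessf"
    and mu_pos: "\<mu> > 0"
    and strong: "strongly_convex_on UNIV \<mu> f"
    and minimizer: "\<And>y. f xstar \<le> f y"
    and e_deriv: "\<And>t. t \<ge> t0 \<Longrightarrow> (e has_vector_derivative e' t) (at t within {t0..})"
    and e'_cont: "continuous_on {t0..} e'"
    and x_deriv: "\<And>t. t \<ge> t0 \<Longrightarrow> (x has_vector_derivative x' t) (at t within {t0..})"
    and x'_deriv: "\<And>t. t \<ge> t0 \<Longrightarrow> (x' has_vector_derivative x'' t) (at t within {t0..})"
    and ode: "\<And>t. t \<ge> t0 \<Longrightarrow>
       x'' t + (2 * sqrt \<mu>) *\<^sub>R x' t + \<beta> *\<^sub>R hessf (x t) (x' t) + \<beta> *\<^sub>R e' t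
         + gradf (x t) + e t = 0"
    and beta: "0 \<le> \<beta>" "\<beta> \<le> 1 / (2 * sqrt \<mu>)"
    and e_int: "(\<lambda>t. norm (e t)) integrable_on {t0..}"
    and e'_int: "(\<lambda>t. norm (e' t)) integrable_on {t0..}"
  shows
    "(let E = energy f gradf xstar \<mu> \<beta> x x';
          M = sqrt (2 * E t0) + integral {t0..} (\<lambda>\<tau>. norm (e \<tau> + \<beta> *\<^sub>R e' \<tau>))
      in (\<forall>t\<ge>t0. E t \<le> E t0 * exp (- (sqrt \<mu> / 2) * (t - t0))
              + M * exp (- (sqrt \<mu> / 2) * t)
                * integral {t0..t} (\<lambda>\<tau>. exp (sqrt \<mu> / 2 * \<tau>) * norm (e \<tau> + \<beta> *\<^sub>R e' \<tau>)))
       \<and> (E \<longlongrightarrow> 0) at_top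
       \<and> ((\<lambda>t. f (x t)) \<longlongrightarrow> f xstar) at_top
       \<and> ((\<lambda>t. norm (x t - xstar)) \<longlongrightarrow> 0) at_top
       \<and> ((\<lambda>t. norm (gradf (x t))) \<longlongrightarrow> 0) at_top
       \<and> ((\<lambda>t. norm (x' t)) \<longlongrightarrow> 0) at_top
       \<and> (\<forall>p>0. (\<lambda>t. norm (e t + \<beta> *\<^sub>R e' t)) \<in> O(\<lambda>t. 1 / t powr p) \<longrightarrow>
            E \<in> O(\<lambda>t. 1 / t powr p)
          \<and> (\<lambda>t. f (x t) - f xstar) \<in> O(\<lambda>t. 1 / t powr p)
          \<and> (\<lambda>t. (norm (x t - xstar))\<^sup>2) \<in> O(\<lambda>t. 1 / t powr p)
          \<and> (\<lambda>t. (norm (x' t))\<^sup>2) \<in> O(\<lambda>t. 1 / t powr p)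
          \<and> (\<beta> > 0 \<longrightarrow>
               (\<lambda>t. exp (- sqrt \<mu> * t)
                  * integral {t0..t} (\<lambda>s. exp (sqrt \<mu> * s) * (norm (gradf (x s)))\<^sup>2))
                 \<in> O(\<lambda>t. 1 / t powr p))))"
proof -
  interpret hessian_damped_trajectory f gradf hessf xstar \<mu> \<beta> t0 e e' x x' x''
    by unfold_locales (fact assms)+
  have g_fold: "e \<tau> + \<beta> *\<^sub>R e' \<tau> = g \<tau>" for \<tau>
    by (simp add: g_def)
  have exp_convolution_fold:
    "exp (- c * t) * integral {t0..t} (\<lambda>\<tau>. exp (c * \<tau>) * h \<tau>) = exp_convolution c t0 h t" for c t h
    by (simp add: exp_convolution_def)
  show ?thesis
    unfolding Let_def g_fold M_def[symmetric] mult.assoc exp_convolution_fold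
    using energy_estimate energy_tendsto_zero objective_tendsto_min dist_xstar_tendsto_zero
      gradf_tendsto_zero velocity_tendsto_zero energy_bigo gap_bigo dist_xstar_sq_bigo
      velocity_sq_bigo gradient_integral_bigo
    by blast
qed

end
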